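(* For every $x\in\mathbb{R}$ there exists $k\in\{0,1,2,3\}$ such that $|\mathrm{Re}(H^{(k)}(x))|\ge 1/4$, where $H^{(k)}$ denotes the $k$-th derivative of $H$.
   Context: Rudin–Shapiro polynomials: $P_0(z)=Q_0(z)=1$ and for $s\ge0$, $P_{s+1}(z)=P_s(z)+z^{2^s}Q_s(z)$, $Q_{s+1}(z)=P_s(z)-z^{2^s}Q_s(z)$. Let $t$ be an odd positive integer and $T:=2^{t+10}$. For $x\in\mathbb{R}$ define $\alpha(x):=2^{-(t+1)/2}P_t(e^{ix/T})$, $\beta(x):=2^{-(t+1)/2}Q_t(e^{ix/T})$, and $H(x):=e^{ix}\alpha(x)+e^{2ix}\beta(x)$. *)

theory Defs
  imports "HOL-Analysis.Analysis"
begin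

fun RS_P :: "nat \<Rightarrow> complex \<Rightarrow> complex"
and RS_Q :: "nat \<Rightarrow> complex \<Rightarrow> complex" where
  "RS_P 0 z = 1"
| "RS_Q 0 z = 1"
| "RS_P (Suc s) z = RS_P s z + z ^ (2 ^ s) * RS_Q s z"
| "RS_Q (Suc s) z = RS_P s z - z ^ (2 ^ s) * RS_Q s z"

definition RS_T :: "nat \<Rightarrow> real" where
  "RS_T t = 2 ^ (t + 10)"

definition RS_alpha :: "nat \<Rightarrow> real \<Rightarrow> complex" where
  "RS_alpha t x = complex_of_real (2 powr (- (real t + 1) / 2))
                   * RS_P t (exp (\<i> * complex_of_real (x / RS_T t)))"

definition RS_beta :: "nat \<Rightarrow> real \<Rightarrow> complex" where
  "RS_beta t x = complex_of_real (2 powr (- (real t + 1) / 2))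
                   * RS_Q t (exp (\<i> * complex_of_real (x / RS_T t)))"

definition RS_H :: "nat \<Rightarrow> real \<Rightarrow> complex" where
  "RS_H t x = exp (\<i> * complex_of_real x) * RS_alpha t x
              + exp (2 * \<i> * complex_of_real x) * RS_beta t x"

definition higher_vderiv :: "nat \<Rightarrow> (real \<Rightarrow> 'a::real_normed_vector) \<Rightarrow> real \<Rightarrow> 'a" where
  "higher_vderiv k f = ((\<lambda>g x. vector_derivative g (at x)) ^^ k) f"

end

theory Submission
  imports Defs
begin

text \<open>
  With c = 2^(-(t+1)/2), z = e^(ix/T) and p_j, q_j the coefficients of P_t, Q_t, the function H is
  the exponential sum c * sum_(j < 2^t) (p_j e^(i(1 + j/T)x) + q_j e^(i(2 + j/T)x)), so its k-th
  derivative multiplies the terms by (i(1 + j/T))^k and (i(2 + j/T))^k.  As j/T <= 2^t/T = 2^(-10),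
  a binomial expansion gives H^(k)(x) = i^k (A + 2^k B) + E_k with A = e^(ix) alpha(x) and
  B = e^(2ix) beta(x), where E_k is a combination of the weighted sums sum_j p_j j^m z^j and
  sum_j q_j j^m z^j (m >= 1).  On the unit circle the pair of these sums has norm at most
  2^((t+1)/2) 2^(tm), by induction along the Rudin-Shapiro recursion and the parallelogram law;
  this makes |E_k| < 1/8 for k <= 3.  The parallelogram law also gives |alpha|^2 + |beta|^2 = 1,
  and then the four numbers Re(i^k (A + 2^k B)), k = 0..3, cannot all lie in (-3/8, 3/8).
\<close>

lemma sum_lessThan_add: "(\<Sum>j<m + n. f j) = (\<Sum>j<m. f j) + (\<Sum>j<n. f (m + j))"
  for f :: "nat \<Rightarrow> 'a::comm_monoid_add"
  by (induction n) (simp_all add: add.assoc)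

lemma sum_atMost_split_first: "(\<Sum>l\<le>k. f l) = f 0 + (\<Sum>l\<in>{1..k}. f l)"
  for f :: "nat \<Rightarrow> 'a::comm_monoid_add"
  by (simp add: atMost_atLeast0 sum.atLeast_Suc_atMost)

lemma parallelogram_cmod: "cmod (a + b) ^ 2 + cmod (a - b) ^ 2 = 2 * (cmod a ^ 2 + cmod b ^ 2)"
  by (simp only: cmod_power2) (simp add: power2_eq_square algebra_simps)

lemma norm_Pair_add_diff_unit:
  assumes "cmod w = 1"
  shows "norm (a + w * b, a - w * b) = sqrt 2 * norm (a, b)"
  using parallelogram_cmod[of a "w * b"] assms
  by (simp add: norm_Pair norm_mult real_sqrt_mult[symmetric])

lemma norm_binomial_tail_le:
  fixes a b :: complex and M :: "nat \<Rightarrow> complex"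
  assumes "0 \<le> \<epsilon>" and "\<And>l. 1 \<le> l \<Longrightarrow> cmod b ^ l * cmod (M l) \<le> \<epsilon>"
  shows "cmod (\<Sum>l\<in>{1..k}. of_nat (k choose l) * b ^ l * a ^ (k - l) * M l) \<le> \<epsilon> * (1 + cmod a) ^ k"
proof -
  have "cmod (\<Sum>l\<in>{1..k}. of_nat (k choose l) * b ^ l * a ^ (k - l) * M l)
          \<le> (\<Sum>l\<in>{1..k}. real (k choose l) * cmod a ^ (k - l) * (cmod b ^ l * cmod (M l)))"
    by (rule order_trans[OF norm_sum]) (simp add: norm_mult norm_power ac_simps)
  also have "\<dots> \<le> (\<Sum>l\<in>{1..k}. real (k choose l) * cmod a ^ (k - l) * \<epsilon>)"
    by (intro sum_mono mult_left_mono assms(2)) auto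
  also have "\<dots> \<le> (\<Sum>l\<le>k. real (k choose l) * cmod a ^ (k - l) * \<epsilon>)"
    by (rule sum_mono2) (use assms(1) in auto)
  also have "\<dots> = \<epsilon> * (1 + cmod a) ^ k"
    by (simp add: binomial_ring sum_distrib_left ac_simps)
  finally show ?thesis .
qed

lemma exists_Re_i_power_ge:
  fixes A B :: complex
  assumes "cmod A ^ 2 + cmod B ^ 2 = 1"
  shows "\<exists>k\<le>3. 3 / 8 \<le> \<bar>Re (\<i> ^ k * (A + 2 ^ k * B))\<bar>"
proof (rule ccontr)
  assume "\<not> ?thesis"
  then have small: "\<bar>Re (\<i> ^ k * (A + 2 ^ k * B))\<bar> < 3 / 8" if "k \<le> 3" for k
    using that by (meson not_le)
  have "\<bar>Re A + Re B\<bar> < 3 / 8" "\<bar>- Im A - 2 * Im B\<bar> < 3 / 8" "\<bar>- Re A - 4 * Re B\<bar> < 3 / 8"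
    using small[of 0] small[of 1] small[of 2] by (simp_all add: power2_eq_square)
  moreover have "\<bar>Im A + 8 * Im B\<bar> < 3 / 8"
    using small[of 3] by (simp add: power3_eq_cube add.commute)
  ultimately have "\<bar>Re B\<bar> \<le> 1 / 4" "\<bar>Re A\<bar> \<le> 5 / 8" "\<bar>Im B\<bar> \<le> 1 / 8" "\<bar>Im A\<bar> \<le> 5 / 8"
    by (auto simp: abs_if split: if_splits)
  then have "Re B ^ 2 \<le> (1 / 4) ^ 2" "Re A ^ 2 \<le> (5 / 8) ^ 2" "Im B ^ 2 \<le> (1 / 8) ^ 2" "Im A ^ 2 \<le> (5 / 8) ^ 2"
    by (simp_all only: abs_le_square_iff[symmetric])
  moreover have "Re A ^ 2 + Im A ^ 2 + Re B ^ 2 + Im B ^ 2 = 1"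
    using assms by (simp add: cmod_power2)
  ultimately show False
    by (simp add: power2_eq_square)
qed

definition exp_sum :: "'a set \<Rightarrow> ('a \<Rightarrow> complex) \<Rightarrow> ('a \<Rightarrow> real) \<Rightarrow> real \<Rightarrow> complex" where
  "exp_sum A a \<omega> x = (\<Sum>j\<in>A. a j * exp (\<i> * complex_of_real (\<omega> j * x)))"

lemma has_vector_derivative_exp_i_mult:
  "((\<lambda>x. exp (\<i> * complex_of_real (\<omega> * x))) has_vector_derivative
     \<i> * complex_of_real \<omega> * exp (\<i> * complex_of_real (\<omega> * x))) (at x)"
proof -
  have "((\<lambda>w. exp (\<i> * complex_of_real \<omega> * w)) has_field_derivative
          exp (\<i> * complex_of_real \<omega> * of_real x) * (\<i> * complex_of_real \<omega>)) (at (of_real x))"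
    by (auto intro!: derivative_eq_intros)
  from has_vector_derivative_real_field[OF this] show ?thesis
    by (simp add: ac_simps)
qed

lemma vector_derivative_exp_sum:
  "vector_derivative (exp_sum A a \<omega>) (at x) = exp_sum A (\<lambda>j. a j * (\<i> * complex_of_real (\<omega> j))) \<omega> x"
proof (rule vector_derivative_at)
  have "(exp_sum A a \<omega> has_vector_derivative
          (\<Sum>j\<in>A. a j * (\<i> * complex_of_real (\<omega> j) * exp (\<i> * complex_of_real (\<omega> j * x))))) (at x)"
    unfolding exp_sum_def
    by (intro has_vector_derivative_sum has_vector_derivative_mult_right has_vector_derivative_exp_i_mult)
  then show "(exp_sum A a \<omega> has_vector_derivative exp_sum A (\<lambda>j. a j * (\<i> * complex_of_real (\<omega> j))) \<omega> x) (at x)"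
    by (simp add: exp_sum_def mult.assoc)
qed

lemma higher_vderiv_exp_sum:
  "higher_vderiv k (exp_sum A a \<omega>) = exp_sum A (\<lambda>j. a j * (\<i> * complex_of_real (\<omega> j)) ^ k) \<omega>"
proof (induction k)
  case 0
  show ?case by (simp add: higher_vderiv_def)
next
  case (Suc k)
  have "higher_vderiv (Suc k) (exp_sum A a \<omega>) = (\<lambda>x. vector_derivative (higher_vderiv k (exp_sum A a \<omega>)) (at x))"
    by (simp add: higher_vderiv_def)
  then show ?case
    by (simp add: Suc vector_derivative_exp_sum ac_simps)
qed

lemma higher_vderiv_exp_sum_add:
  assumes "finite A" and "finite B"
  shows "higher_vderiv k (\<lambda>x. exp_sum A a \<omega> x + exp_sum B b \<mu> x) =
           (\<lambda>x. exp_sum A (\<lambda>j. a j * (\<i> * complex_of_real (\<omega> j)) ^ k) \<omega> x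
              + exp_sum B (\<lambda>j. b j * (\<i> * complex_of_real (\<mu> j)) ^ k) \<mu> x)"
proof -
  have as_Plus: "(\<lambda>x. exp_sum A a \<omega> x + exp_sum B b \<mu> x) = exp_sum (A <+> B) (case_sum a b) (case_sum \<omega> \<mu>)"
    for a b :: "_ \<Rightarrow> complex" and \<omega> \<mu>
    by (rule ext) (simp add: exp_sum_def sum.Plus assms comp_def)
  show ?thesis
    unfolding as_Plus higher_vderiv_exp_sum
    by (rule arg_cong3[where f = exp_sum, OF refl]) (auto split: sum.split)
qed

definition moment_sum :: "(nat \<Rightarrow> complex) \<Rightarrow> nat \<Rightarrow> nat \<Rightarrow> complex \<Rightarrow> complex" where
  "moment_sum c n m z = (\<Sum>j<n. c j * of_nat j ^ m * z ^ j)"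

lemma moment_sum_cmult: "moment_sum (\<lambda>j. a * c j) n m z = a * moment_sum c n m z"
  by (simp add: moment_sum_def sum_distrib_left ac_simps)

lemma moment_sum_binomial:
  "(\<Sum>j<n. c j * (b * of_nat j + a) ^ k * z ^ j) =
     (\<Sum>l\<le>k. of_nat (k choose l) * b ^ l * a ^ (k - l) * moment_sum c n l z)"
proof -
  have "(\<Sum>j<n. c j * (b * of_nat j + a) ^ k * z ^ j) =
        (\<Sum>j<n. \<Sum>l\<le>k. c j * (of_nat (k choose l) * (b * of_nat j) ^ l * a ^ (k - l)) * z ^ j)"
    by (simp add: binomial_ring sum_distrib_left sum_distrib_right)
  also have "\<dots> = (\<Sum>l\<le>k. \<Sum>j<n. c j * (of_nat (k choose l) * (b * of_nat j) ^ l * a ^ (k - l)) * z ^ j)"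
    by (rule sum.swap)
  also have "\<dots> = (\<Sum>l\<le>k. of_nat (k choose l) * b ^ l * a ^ (k - l) * moment_sum c n l z)"
    by (simp add: moment_sum_def sum_distrib_left power_mult_distrib ac_simps)
  finally show ?thesis .
qed

lemma exp_i_shifted_frequency:
  "exp (\<i> * complex_of_real ((a + real j / T) * x)) =
     exp (\<i> * complex_of_real (a * x)) * exp (\<i> * complex_of_real (x / T)) ^ j"
proof -
  have "\<i> * complex_of_real ((a + real j / T) * x) =
          \<i> * complex_of_real (a * x) + of_nat j * (\<i> * complex_of_real (x / T))"
    by (simp add: algebra_simps)
  then show ?thesis
    by (simp only: exp_add exp_of_nat_mult)
qed

lemma exp_sum_shifted_frequencies:
  "exp_sum {..<n} (\<lambda>j. c j * (\<i> * complex_of_real (a + real j / T)) ^ k) (\<lambda>j. a + real j / T) x =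
     \<i> ^ k * exp (\<i> * complex_of_real (a * x)) *
       (\<Sum>l\<le>k. of_nat (k choose l) * complex_of_real (1 / T) ^ l * complex_of_real a ^ (k - l)
                 * moment_sum c n l (exp (\<i> * complex_of_real (x / T))))"
proof -
  have "(\<i> * complex_of_real (a + real j / T)) ^ k =
          \<i> ^ k * (complex_of_real (1 / T) * of_nat j + complex_of_real a) ^ k" for j
    by (simp add: power_mult_distrib add.commute)
  then show ?thesis
    unfolding exp_sum_def exp_i_shifted_frequency moment_sum_binomial[symmetric]
    by (simp add: sum_distrib_left ac_simps)
qed

fun RS_p :: "nat \<Rightarrow> nat \<Rightarrow> complex" and RS_q :: "nat \<Rightarrow> nat \<Rightarrow> complex" where
  "RS_p 0 j = (if j = 0 then 1 else 0)"
| "RS_q 0 j = (if j = 0 then 1 else 0)"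
| "RS_p (Suc s) j = (if j < 2 ^ s then RS_p s j else RS_q s (j - 2 ^ s))"
| "RS_q (Suc s) j = (if j < 2 ^ s then RS_p s j else - RS_q s (j - 2 ^ s))"

lemma moment_sum_RS_Suc:
  fixes s m :: nat and z :: complex
  defines "N \<equiv> 2 ^ s"
  defines "X \<equiv> (\<Sum>l\<le>m. of_nat (m choose l) * of_nat N ^ (m - l) * moment_sum (RS_q s) N l z)"
  shows "moment_sum (RS_p (Suc s)) (2 * N) m z = moment_sum (RS_p s) N m z + z ^ N * X"
    and "moment_sum (RS_q (Suc s)) (2 * N) m z = moment_sum (RS_p s) N m z - z ^ N * X"
proof -
  have "(\<Sum>j<N. RS_q s j * of_nat (N + j) ^ m * z ^ (N + j)) =
        z ^ N * (\<Sum>j<N. RS_q s j * (1 * of_nat j + of_nat N) ^ m * z ^ j)"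
    by (simp add: sum_distrib_left power_add ac_simps)
  also have "\<dots> = z ^ N * X"
    unfolding moment_sum_binomial X_def by simp
  finally have shifted: "(\<Sum>j<N. RS_q s j * of_nat (N + j) ^ m * z ^ (N + j)) = z ^ N * X" .
  show "moment_sum (RS_p (Suc s)) (2 * N) m z = moment_sum (RS_p s) N m z + z ^ N * X"
    using shifted by (simp add: moment_sum_def mult_2 sum_lessThan_add N_def)
  show "moment_sum (RS_q (Suc s)) (2 * N) m z = moment_sum (RS_p s) N m z - z ^ N * X"
    using shifted by (simp add: moment_sum_def mult_2 sum_lessThan_add N_def sum_negf)
qed

lemma RS_P_Q_eq_moment_sum:
  "RS_P s z = moment_sum (RS_p s) (2 ^ s) 0 z \<and> RS_Q s z = moment_sum (RS_q s) (2 ^ s) 0 z"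
proof (induction s)
  case 0
  show ?case by (simp add: moment_sum_def)
next
  case (Suc s)
  then show ?case
    by (simp only: RS_P.simps RS_Q.simps power_Suc moment_sum_RS_Suc) simp
qed

lemma RS_P_Q_norm_sum:
  assumes "cmod z = 1"
  shows "cmod (RS_P s z) ^ 2 + cmod (RS_Q s z) ^ 2 = 2 ^ (s + 1)"
proof (induction s)
  case 0
  show ?case by simp
next
  case (Suc s)
  have "cmod (z ^ 2 ^ s * RS_Q s z) = cmod (RS_Q s z)"
    using assms by (simp add: norm_mult norm_power)
  then show ?case
    using Suc parallelogram_cmod[of "RS_P s z" "z ^ 2 ^ s * RS_Q s z"] by simp
qed

lemma sum_choose_lessThan: "(\<Sum>l<m. real (m choose l)) = 2 ^ m - 1"
proof -
  have "real (\<Sum>l\<le>m. m choose l) = 2 ^ m"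
    by (simp only: choose_row_sum) simp
  then show ?thesis
    by (simp add: lessThan_Suc_atMost[symmetric])
qed

lemma norm_binomial_sum_lessThan_le:
  fixes M :: "nat \<Rightarrow> complex" and N :: nat
  assumes "\<And>l. cmod (M l) \<le> R * real N ^ l"
  shows "cmod (\<Sum>l<m. of_nat (m choose l) * of_nat N ^ (m - l) * M l) \<le> (2 ^ m - 1) * R * real N ^ m"
proof -
  have "cmod (\<Sum>l<m. of_nat (m choose l) * of_nat N ^ (m - l) * M l)
          \<le> (\<Sum>l<m. real (m choose l) * real N ^ (m - l) * cmod (M l))"
    by (rule order_trans[OF norm_sum]) (simp add: norm_mult norm_power)
  also have "\<dots> \<le> (\<Sum>l<m. real (m choose l) * real N ^ (m - l) * (R * real N ^ l))"
    by (intro sum_mono mult_left_mono assms) simp_all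
  also have "\<dots> = (\<Sum>l<m. real (m choose l) * (R * real N ^ m))"
    by (intro sum.cong refl) (simp add: algebra_simps flip: power_add)
  also have "\<dots> = (2 ^ m - 1) * R * real N ^ m"
    by (simp add: sum_distrib_right sum_choose_lessThan mult.assoc flip: sum_distrib_right)
  finally show ?thesis .
qed

lemma norm_RS_moment_sums_Suc_le:
  assumes "cmod z = 1"
    and IH: "\<And>l. norm (moment_sum (RS_p s) (2 ^ s) l z, moment_sum (RS_q s) (2 ^ s) l z) \<le> R * 2 ^ (s * l)"
  shows "norm (moment_sum (RS_p (Suc s)) (2 ^ Suc s) m z, moment_sum (RS_q (Suc s)) (2 ^ Suc s) m z)
           \<le> sqrt 2 * R * 2 ^ (Suc s * m)"
proof -
  define N where "N = (2::nat) ^ s"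
  define A where "A = moment_sum (RS_p s) N m z"
  define B where "B = moment_sum (RS_q s) N m z"
  define E where "E = (\<Sum>l<m. of_nat (m choose l) * of_nat N ^ (m - l) * moment_sum (RS_q s) N l z)"
  have IH_N: "norm (moment_sum (RS_p s) N l z, moment_sum (RS_q s) N l z) \<le> R * real N ^ l" for l
    using IH[of l] by (simp add: N_def power_mult)
  have E_le: "cmod E \<le> (2 ^ m - 1) * R * real N ^ m"
    unfolding E_def by (rule norm_binomial_sum_lessThan_le, rule order_trans[OF norm_snd_le IH_N])
  have "norm (A, E + B) \<le> norm (A, B) + norm (0::complex, E)"
    using norm_triangle_ineq[of "(A, B)" "(0, E)"] by (simp add: add.commute)
  also have "\<dots> \<le> R * real N ^ m + (2 ^ m - 1) * R * real N ^ m"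
    using IH_N[of m] E_le by (simp add: A_def B_def norm_Pair)
  finally have AX_le: "norm (A, E + B) \<le> 2 ^ m * R * real N ^ m"
    by (simp add: algebra_simps)
  have "(\<Sum>l\<le>m. of_nat (m choose l) * of_nat N ^ (m - l) * moment_sum (RS_q s) N l z) = E + B"
    by (simp add: E_def B_def lessThan_Suc_atMost[symmetric])
  moreover have "(2::nat) ^ Suc s = 2 * N"
    by (simp add: N_def)
  ultimately have "moment_sum (RS_p (Suc s)) (2 ^ Suc s) m z = A + z ^ N * (E + B)"
    and "moment_sum (RS_q (Suc s)) (2 ^ Suc s) m z = A - z ^ N * (E + B)"
    using moment_sum_RS_Suc[of s m z, folded N_def] by (simp_all only: A_def)
  moreover have "cmod (z ^ N) = 1"
    using assms by (simp add: norm_power)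
  ultimately have "norm (moment_sum (RS_p (Suc s)) (2 ^ Suc s) m z, moment_sum (RS_q (Suc s)) (2 ^ Suc s) m z)
                     = sqrt 2 * norm (A, E + B)"
    by (simp only: norm_Pair_add_diff_unit)
  also have "\<dots> \<le> sqrt 2 * (2 ^ m * R * real N ^ m)"
    using AX_le by simp
  also have "\<dots> = sqrt 2 * R * 2 ^ (Suc s * m)"
    by (simp add: N_def power_add power_mult)
  finally show ?thesis .
qed

lemma norm_RS_moment_sums_le:
  assumes "cmod z = 1"
  shows "norm (moment_sum (RS_p s) (2 ^ s) m z, moment_sum (RS_q s) (2 ^ s) m z)
           \<le> sqrt 2 ^ (s + 1) * 2 ^ (s * m)"
proof (induction s arbitrary: m)
  case 0
  have "cmod ((0::complex) ^ m) \<le> 1"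
    by (cases m) auto
  then show ?case
    by (simp add: moment_sum_def norm_Pair real_sqrt_mult power_le_one)
next
  case (Suc s)
  from norm_RS_moment_sums_Suc_le[OF assms Suc.IH, of m] show ?case
    by (simp only: mult.assoc power_Suc add_Suc)
qed

definition RS_scale :: "nat \<Rightarrow> real" where
  "RS_scale t = 2 powr (- (real t + 1) / 2)"

lemma RS_scale_mult_sqrt2_pow: "RS_scale t * sqrt 2 ^ (t + 1) = 1"
proof -
  have "sqrt 2 ^ (t + 1) = 2 powr ((real t + 1) / 2)"
    by (simp add: powr_half_sqrt[symmetric] powr_realpow[symmetric] powr_powr powr_add[symmetric]
                  add_divide_distrib add.commute)
  then show ?thesis
    by (simp add: RS_scale_def add_divide_distrib[symmetric] flip: powr_add)
qed

lemma RS_alpha_beta_norm: "cmod (RS_alpha t x) ^ 2 + cmod (RS_beta t x) ^ 2 = 1"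
proof -
  define z where "z = exp (\<i> * complex_of_real (x / RS_T t))"
  have "cmod (RS_alpha t x) ^ 2 + cmod (RS_beta t x) ^ 2
          = RS_scale t ^ 2 * (cmod (RS_P t z) ^ 2 + cmod (RS_Q t z) ^ 2)"
    by (simp add: RS_alpha_def RS_beta_def RS_scale_def z_def norm_mult power_mult_distrib algebra_simps)
  also have "\<dots> = RS_scale t ^ 2 * (sqrt 2 ^ 2) ^ (t + 1)"
    by (simp add: RS_P_Q_norm_sum z_def)
  also have "\<dots> = (RS_scale t * sqrt 2 ^ (t + 1)) ^ 2"
    by (simp only: power_mult_distrib power_mult[symmetric] mult.commute)
  finally show ?thesis
    by (simp only: RS_scale_mult_sqrt2_pow power_one)
qed

lemma RS_moment_sums_scaled_le:
  assumes "cmod z = 1" and "1 \<le> m"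
  shows "cmod (complex_of_real (1 / RS_T t)) ^ m
           * cmod (complex_of_real (RS_scale t) * moment_sum (RS_p t) (2 ^ t) m z) \<le> 1 / 1024"
    and "cmod (complex_of_real (1 / RS_T t)) ^ m
           * cmod (complex_of_real (RS_scale t) * moment_sum (RS_q t) (2 ^ t) m z) \<le> 1 / 1024"
proof -
  define M where "M = (moment_sum (RS_p t) (2 ^ t) m z, moment_sum (RS_q t) (2 ^ t) m z)"
  have weight_nonneg: "0 \<le> RS_scale t * (1 / RS_T t) ^ m"
    by (simp add: RS_scale_def RS_T_def)
  have "RS_scale t * (1 / RS_T t) ^ m * norm M \<le> RS_scale t * (1 / RS_T t) ^ m * (sqrt 2 ^ (t + 1) * 2 ^ (t * m))"
    unfolding M_def by (intro mult_left_mono norm_RS_moment_sums_le assms(1) weight_nonneg)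
  also have "\<dots> = (RS_scale t * sqrt 2 ^ (t + 1)) * (2 ^ t / RS_T t) ^ m"
    by (simp add: power_mult power_divide)
  also have "\<dots> = (1 / 1024) ^ m"
    by (simp only: RS_scale_mult_sqrt2_pow) (simp add: RS_T_def power_add)
  also have "\<dots> \<le> 1 / 1024"
    using power_decreasing[OF assms(2), of "1 / 1024 :: real"] by simp
  finally have M_le: "RS_scale t * (1 / RS_T t) ^ m * norm M \<le> 1 / 1024" .
  have "cmod (complex_of_real (1 / RS_T t)) ^ m * cmod (complex_of_real (RS_scale t) * w)
          = RS_scale t * (1 / RS_T t) ^ m * cmod w" for w
    by (simp only: norm_mult norm_power norm_of_real) (simp add: RS_scale_def RS_T_def)
  then show "cmod (complex_of_real (1 / RS_T t)) ^ m
               * cmod (complex_of_real (RS_scale t) * moment_sum (RS_p t) (2 ^ t) m z) \<le> 1 / 1024"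
    and "cmod (complex_of_real (1 / RS_T t)) ^ m
               * cmod (complex_of_real (RS_scale t) * moment_sum (RS_q t) (2 ^ t) m z) \<le> 1 / 1024"
    using order_trans[OF mult_left_mono[OF norm_fst_le weight_nonneg] M_le[unfolded M_def]]
          order_trans[OF mult_left_mono[OF norm_snd_le weight_nonneg] M_le[unfolded M_def]]
    by simp_all
qed

lemma RS_H_eq_exp_sum:
  fixes t :: nat
  defines "c \<equiv> complex_of_real (RS_scale t)"
  shows "RS_H t = (\<lambda>x. exp_sum {..<2 ^ t} (\<lambda>j. c * RS_p t j) (\<lambda>j. 1 + real j / RS_T t) x
                      + exp_sum {..<2 ^ t} (\<lambda>j. c * RS_q t j) (\<lambda>j. 2 + real j / RS_T t) x)"
proof
  fix x
  define z where "z = exp (\<i> * complex_of_real (x / RS_T t))"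
  have "RS_H t x = exp (\<i> * complex_of_real x) * (c * RS_P t z)
                     + exp (\<i> * complex_of_real (2 * x)) * (c * RS_Q t z)"
    by (simp add: RS_H_def RS_alpha_def RS_beta_def RS_scale_def c_def z_def ac_simps)
  also have "\<dots> = (\<Sum>j<2 ^ t. c * RS_p t j * (exp (\<i> * complex_of_real x) * z ^ j))
                   + (\<Sum>j<2 ^ t. c * RS_q t j * (exp (\<i> * complex_of_real (2 * x)) * z ^ j))"
    using RS_P_Q_eq_moment_sum[of t z] by (simp add: moment_sum_def sum_distrib_left ac_simps)
  also have "\<dots> = exp_sum {..<2 ^ t} (\<lambda>j. c * RS_p t j) (\<lambda>j. 1 + real j / RS_T t) x
                   + exp_sum {..<2 ^ t} (\<lambda>j. c * RS_q t j) (\<lambda>j. 2 + real j / RS_T t) x"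
    unfolding exp_sum_def z_def exp_i_shifted_frequency by simp
  finally show "RS_H t x = exp_sum {..<2 ^ t} (\<lambda>j. c * RS_p t j) (\<lambda>j. 1 + real j / RS_T t) x
                   + exp_sum {..<2 ^ t} (\<lambda>j. c * RS_q t j) (\<lambda>j. 2 + real j / RS_T t) x" .
qed

lemma higher_vderiv_RS_H:
  fixes t k :: nat and x :: real
  defines "c \<equiv> complex_of_real (RS_scale t)"
    and "\<tau> \<equiv> complex_of_real (1 / RS_T t)"
    and "z \<equiv> exp (\<i> * complex_of_real (x / RS_T t))"
  shows "higher_vderiv k (RS_H t) x =
           \<i> ^ k * (exp (\<i> * complex_of_real x)
                       * (\<Sum>l\<le>k. of_nat (k choose l) * \<tau> ^ l * 1 ^ (k - l) * moment_sum (\<lambda>j. c * RS_p t j) (2 ^ t) l z)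
                   + exp (2 * \<i> * complex_of_real x)
                       * (\<Sum>l\<le>k. of_nat (k choose l) * \<tau> ^ l * 2 ^ (k - l) * moment_sum (\<lambda>j. c * RS_q t j) (2 ^ t) l z))"
  unfolding RS_H_eq_exp_sum higher_vderiv_exp_sum_add[OF finite_lessThan finite_lessThan]
    exp_sum_shifted_frequencies c_def \<tau>_def z_def
  by (simp add: algebra_simps)

lemma RS_H_derivative_approx:
  assumes "k \<le> 3"
  shows "cmod (higher_vderiv k (RS_H t) x
                 - \<i> ^ k * (exp (\<i> * complex_of_real x) * RS_alpha t x
                             + 2 ^ k * (exp (2 * \<i> * complex_of_real x) * RS_beta t x))) < 1 / 8"
    (is "cmod ?D < _")
proof -
  define c where "c = complex_of_real (RS_scale t)"
  define \<tau> where "\<tau> = complex_of_real (1 / RS_T t)"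
  define z where "z = exp (\<i> * complex_of_real (x / RS_T t))"
  define Mp where "Mp l = moment_sum (\<lambda>j. c * RS_p t j) (2 ^ t) l z" for l
  define Mq where "Mq l = moment_sum (\<lambda>j. c * RS_q t j) (2 ^ t) l z" for l
  define tail_p where "tail_p = (\<Sum>l\<in>{1..k}. of_nat (k choose l) * \<tau> ^ l * 1 ^ (k - l) * Mp l)"
  define tail_q where "tail_q = (\<Sum>l\<in>{1..k}. of_nat (k choose l) * \<tau> ^ l * 2 ^ (k - l) * Mq l)"
  have "Mp 0 = RS_alpha t x" and "Mq 0 = RS_beta t x"
    using RS_P_Q_eq_moment_sum[of t z]
    by (simp_all add: Mp_def Mq_def moment_sum_cmult c_def z_def RS_alpha_def RS_beta_def RS_scale_def)
  then have "?D = \<i> ^ k * (exp (\<i> * complex_of_real x) * tail_p + exp (2 * \<i> * complex_of_real x) * tail_q)"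
    unfolding higher_vderiv_RS_H sum_atMost_split_first tail_p_def tail_q_def Mp_def Mq_def c_def \<tau>_def z_def
    by (simp add: algebra_simps)
  then have "cmod ?D \<le> cmod tail_p + cmod tail_q"
    using norm_triangle_ineq[of "exp (\<i> * complex_of_real x) * tail_p" "exp (2 * \<i> * complex_of_real x) * tail_q"]
    by (simp add: norm_mult norm_power)
  also have "\<dots> \<le> 1 / 1024 * (1 + cmod (1::complex)) ^ k + 1 / 1024 * (1 + cmod (2::complex)) ^ k"
    unfolding tail_p_def tail_q_def Mp_def Mq_def moment_sum_cmult c_def \<tau>_def
    by (intro add_mono norm_binomial_tail_le RS_moment_sums_scaled_le) (simp_all add: z_def)
  also have "\<dots> \<le> 1 / 1024 * 2 ^ 3 + 1 / 1024 * 3 ^ 3"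
    using power_increasing[OF assms, of "2::real"] power_increasing[OF assms, of "3::real"] by simp
  finally show ?thesis
    by simp
qed

theorem lemma3p5:
  fixes t :: nat and x :: real
  assumes "odd t"
  shows "\<exists>k \<in> {0..3::nat}. \<bar>Re (higher_vderiv k (RS_H t) x)\<bar> \<ge> 1/4"
proof -
  define A where "A = exp (\<i> * complex_of_real x) * RS_alpha t x"
  define B where "B = exp (2 * \<i> * complex_of_real x) * RS_beta t x"
  have "cmod A ^ 2 + cmod B ^ 2 = 1"
    using RS_alpha_beta_norm[of t x] by (simp add: A_def B_def norm_mult)
  then obtain k where "k \<le> 3" and main: "3 / 8 \<le> \<bar>Re (\<i> ^ k * (A + 2 ^ k * B))\<bar>"
    using exists_Re_i_power_ge by blast
  have "\<bar>Re (higher_vderiv k (RS_H t) x - \<i> ^ k * (A + 2 ^ k * B))\<bar> < 1 / 8"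
    using abs_Re_le_cmod RS_H_derivative_approx[OF \<open>k \<le> 3\<close>, of t x] unfolding A_def B_def
    by (rule le_less_trans)
  then have "\<bar>Re (higher_vderiv k (RS_H t) x) - Re (\<i> ^ k * (A + 2 ^ k * B))\<bar> < 1 / 8"
    by (simp only: minus_complex.sel)
  with main have "1 / 4 \<le> \<bar>Re (higher_vderiv k (RS_H t) x)\<bar>"
    by linarith
  with \<open>k \<le> 3\<close> show ?thesis
    by auto
qed

end
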